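(* Let $X$ be a set and $\{d_r\colon X\times X\to\mathbb{R}_{\ge 0}\cup\{\infty\}\}_{r>0}$ a family of functions satisfying the Self-distance Axiom, Upper semi-continuity and the Weak triangle inequality (as described in the context). Equip $X$ with the topology having as basis the sets $N_r^{\varepsilon}(x)=\{y\in X\mid d_r(x,y)<\varepsilon\}$ for $x\in X$, $r>0$, $\varepsilon>0$. Then for every $x\in X$ and every $r>0$, the function \[ d_r(x,\cdot)\colon X\to\mathbb{R}_{\ge0}\cup\{\infty\},\quad y\mapsto d_r(x,y) \] is upper semi-continuous.
   Context: The axioms, required for all $x,y,z\in X$: (Self-distance Axiom) $d_r(x,x)=0$ for all $r>0$. (Upper semi-continuity) if $r_1\le r_2$ then $d_{r_1}(x,y)\le d_{r_2}(x,y)$; and if $d_r(x,y)<\varepsilon$ then there exists $\delta>0$ with $d_{r+\delta}(x,y)<\varepsilon$. (Weak triangle inequality) for $r_1,r_2,r_3>0$, if $d_{r_1+r_2}(x,y)<r_3$ and $d_{r_1+r_2+r_3}(y,z)<r_2$, then $d_{r_1}(x,z)\le d_{r_1+r_2}(x,y)+d_{r_1+r_2+r_3}(y,z)$. The functions $d_r$ need not be symmetric. Under these axioms the sets $N_r^\varepsilon(x)$ form a basis of a topology on $X$. *)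

theory Defs
  imports "HOL-Analysis.Analysis"
begin

text \<open>A family of functions d r : X \<times> X \<rightarrow> [0,\<infinity>], indexed by r > 0, modelled as
  d :: real \<Rightarrow> 'a \<Rightarrow> 'a \<Rightarrow> ennreal; only values with r > 0 and points in X matter.\<close>

definition self_distance_axiom :: "'a set \<Rightarrow> (real \<Rightarrow> 'a \<Rightarrow> 'a \<Rightarrow> ennreal) \<Rightarrow> bool" where
  "self_distance_axiom X d \<longleftrightarrow> (\<forall>x\<in>X. \<forall>r>0. d r x x = 0)"

definition upper_semicont_axiom :: "'a set \<Rightarrow> (real \<Rightarrow> 'a \<Rightarrow> 'a \<Rightarrow> ennreal) \<Rightarrow> bool" where
  "upper_semicont_axiom X d \<longleftrightarrow>
     (\<forall>x\<in>X. \<forall>y\<in>X.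
        (\<forall>r1 r2. 0 < r1 \<and> r1 \<le> r2 \<longrightarrow> d r1 x y \<le> d r2 x y) \<and>
        (\<forall>r>0. \<forall>\<epsilon>::real. \<epsilon> > 0 \<and> d r x y < ennreal \<epsilon> \<longrightarrow>
            (\<exists>\<delta>>0. d (r + \<delta>) x y < ennreal \<epsilon>)))"

definition weak_triangle_axiom :: "'a set \<Rightarrow> (real \<Rightarrow> 'a \<Rightarrow> 'a \<Rightarrow> ennreal) \<Rightarrow> bool" where
  "weak_triangle_axiom X d \<longleftrightarrow>
     (\<forall>x\<in>X. \<forall>y\<in>X. \<forall>z\<in>X. \<forall>r1 r2 r3. 0 < r1 \<and> 0 < r2 \<and> 0 < r3 \<longrightarrow>
        d (r1 + r2) x y < ennreal r3 \<longrightarrow> d (r1 + r2 + r3) y z < ennreal r2 \<longrightarrow>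
        d r1 x z \<le> d (r1 + r2) x y + d (r1 + r2 + r3) y z)"

definition nbhd :: "'a set \<Rightarrow> (real \<Rightarrow> 'a \<Rightarrow> 'a \<Rightarrow> ennreal) \<Rightarrow> real \<Rightarrow> real \<Rightarrow> 'a \<Rightarrow> 'a set" where
  "nbhd X d r \<epsilon> x = {y \<in> X. d r x y < ennreal \<epsilon>}"

definition dr_topology :: "'a set \<Rightarrow> (real \<Rightarrow> 'a \<Rightarrow> 'a \<Rightarrow> ennreal) \<Rightarrow> 'a topology" where
  "dr_topology X d = topology_generated_by
      {nbhd X d r \<epsilon> x | x r \<epsilon>. x \<in> X \<and> r > 0 \<and> \<epsilon> > 0}"

definition upper_semicontinuous_on_top :: "'a topology \<Rightarrow> ('a \<Rightarrow> ennreal) \<Rightarrow> bool" where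
  "upper_semicontinuous_on_top T f \<longleftrightarrow>
     (\<forall>y\<in>topspace T. \<forall>c. f y < c \<longrightarrow> (\<exists>U. openin T U \<and> y \<in> U \<and> (\<forall>z\<in>U. f z < c)))"

end

theory Submission
  imports Defs
begin

text \<open>If d_r(x,y) < \<epsilon>, upper semicontinuity in r yields s > 0 with d_{r+s}(x,y) + s < \<epsilon>.
  For z in the basic neighbourhood N_{r+s+\<epsilon>}^s(y), the weak triangle inequality with
  (r_1, r_2, r_3) = (r, s, \<epsilon>) gives d_r(x,z) \<le> d_{r+s}(x,y) + d_{r+s+\<epsilon>}(y,z) < \<epsilon>.
  Hence every sublevel set {d_r(x,\<cdot>) < \<epsilon>} is open, and any c > d_r(x,y) can be
  undercut by such a real \<epsilon>.\<close>

lemma ennreal_less_imp_real_between: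
  fixes a c :: ennreal
  assumes "a < c"
  obtains e where "e > 0" "a < ennreal e" "ennreal e \<le> c"
proof -
  obtain q :: rat where q: "a < ennreal (real_of_rat q)" "ennreal (real_of_rat q) < c"
    using ennreal_rat_dense[OF assms] by blast
  have "0 < ennreal (real_of_rat q)"
    using q(1) by (rule le_less_trans[OF zero_le])
  then have "real_of_rat q > 0"
    by (simp only: ennreal_less_zero_iff)
  then show thesis
    using q(1) less_imp_le[OF q(2)] by (rule that)
qed

lemma openin_dr_topology_nbhd:
  assumes "x \<in> X" and "r > 0" and "\<epsilon> > 0"
  shows "openin (dr_topology X d) (nbhd X d r \<epsilon> x)"
  unfolding dr_topology_def
  by (rule topology_generated_by_Basis) (use assms in blast)

lemma topspace_dr_topology_subset: "topspace (dr_topology X d) \<subseteq> X"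
  by (auto simp: dr_topology_def nbhd_def)

lemma self_mem_nbhd:
  assumes "self_distance_axiom X d" and "x \<in> X" and "r > 0" and "\<epsilon> > 0"
  shows "x \<in> nbhd X d r \<epsilon> x"
  using assms by (simp add: nbhd_def self_distance_axiom_def)

lemma upper_semicont_axiom_mono:
  assumes "upper_semicont_axiom X d" and "x \<in> X" "y \<in> X" and "0 < r1" "r1 \<le> r2"
  shows "d r1 x y \<le> d r2 x y"
  using assms unfolding upper_semicont_axiom_def by blast

lemma upper_semicont_axiom_ex_larger_radius:
  assumes "upper_semicont_axiom X d" and "x \<in> X" "y \<in> X" and "r > 0" "\<epsilon> > 0"
    and "d r x y < ennreal \<epsilon>"
  obtains \<delta> where "\<delta> > 0" "d (r + \<delta>) x y < ennreal \<epsilon>"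
  using assms unfolding upper_semicont_axiom_def by blast

lemma weak_triangle_axiomD:
  assumes "weak_triangle_axiom X d" and "x \<in> X" "y \<in> X" "z \<in> X"
    and "0 < r1" "0 < r2" "0 < r3"
    and "d (r1 + r2) x y < ennreal r3" "d (r1 + r2 + r3) y z < ennreal r2"
  shows "d r1 x z \<le> d (r1 + r2) x y + d (r1 + r2 + r3) y z"
  using assms unfolding weak_triangle_axiom_def by blast

lemma upper_semicont_axiom_slack:
  assumes us: "upper_semicont_axiom X d"
    and x: "x \<in> X" and y: "y \<in> X" and "r > 0" "\<epsilon> > 0"
    and "d r x y < ennreal \<epsilon>"
  obtains s where "s > 0" "d (r + s) x y + ennreal s < ennreal \<epsilon>"
proof -
  obtain \<delta> where "\<delta> > 0" and "d (r + \<delta>) x y < ennreal \<epsilon>"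
    by (rule upper_semicont_axiom_ex_larger_radius[OF assms])
  then obtain t where t: "d (r + \<delta>) x y = ennreal t" "0 \<le> t" "t < \<epsilon>"
    by (cases "d (r + \<delta>) x y") (auto simp: ennreal_less_iff)
  define s where "s = min \<delta> ((\<epsilon> - t) / 2)"
  have "s > 0"
    using \<open>\<delta> > 0\<close> t by (simp add: s_def)
  have "d (r + s) x y \<le> ennreal t"
    unfolding t(1)[symmetric]
    by (rule upper_semicont_axiom_mono[OF us x y]) (use \<open>r > 0\<close> \<open>s > 0\<close> in simp, simp add: s_def)
  then have "d (r + s) x y + ennreal s \<le> ennreal (t + s)"
    using t \<open>s > 0\<close> by (simp add: add_right_mono ennreal_plus)
  also have "\<dots> < ennreal \<epsilon>"
  proof (rule ennreal_lessI)
    have "s \<le> (\<epsilon> - t) / 2"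
      unfolding s_def by (rule min.cobounded2)
    then show "t + s < \<epsilon>"
      using t(3) by argo
  qed (use \<open>\<epsilon> > 0\<close> in simp)
  finally show thesis
    using \<open>s > 0\<close> by (intro that)
qed

lemma nbhd_contains_nbhd:
  assumes "upper_semicont_axiom X d" and wt: "weak_triangle_axiom X d"
    and x: "x \<in> X" and "r > 0" and "\<epsilon> > 0" and y: "y \<in> nbhd X d r \<epsilon> x"
  obtains s where "s > 0" "nbhd X d (r + s + \<epsilon>) s y \<subseteq> nbhd X d r \<epsilon> x"
proof -
  have "y \<in> X" and "d r x y < ennreal \<epsilon>"
    using y by (auto simp: nbhd_def)
  then obtain s where "s > 0" and s: "d (r + s) x y + ennreal s < ennreal \<epsilon>"
    by (rule upper_semicont_axiom_slack[OF assms(1) x _ \<open>r > 0\<close> \<open>\<epsilon> > 0\<close>])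
  have "d (r + s) x y \<le> d (r + s) x y + ennreal s"
    by simp
  then have dxy: "d (r + s) x y < ennreal \<epsilon>"
    using s by (rule le_less_trans)
  then have "d (r + s) x y \<noteq> \<infinity>"
    by auto
  have "d r x z < ennreal \<epsilon>" if z: "z \<in> nbhd X d (r + s + \<epsilon>) s y" for z
  proof -
    have "z \<in> X" and dyz: "d (r + s + \<epsilon>) y z < ennreal s"
      using z by (auto simp: nbhd_def)
    have "d r x z \<le> d (r + s) x y + d (r + s + \<epsilon>) y z"
      by (rule weak_triangle_axiomD[OF wt x \<open>y \<in> X\<close> \<open>z \<in> X\<close> \<open>r > 0\<close> \<open>s > 0\<close> \<open>\<epsilon> > 0\<close> dxy dyz])
    also have "\<dots> < d (r + s) x y + ennreal s"
      using \<open>d (r + s) x y \<noteq> \<infinity>\<close> dyz by (simp add: ennreal_add_left_cancel_less)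
    also have "\<dots> < ennreal \<epsilon>"
      by (rule s)
    finally show ?thesis .
  qed
  then have "nbhd X d (r + s + \<epsilon>) s y \<subseteq> nbhd X d r \<epsilon> x"
    by (auto simp: nbhd_def)
  with \<open>s > 0\<close> show thesis
    by (rule that)
qed

theorem corollary2p5:
  fixes X :: "'a set" and d :: "real \<Rightarrow> 'a \<Rightarrow> 'a \<Rightarrow> ennreal"
  assumes "self_distance_axiom X d"
    and "upper_semicont_axiom X d"
    and "weak_triangle_axiom X d"
    and "x \<in> X" and "r > 0"
  shows "upper_semicontinuous_on_top (dr_topology X d) (\<lambda>y. d r x y)"
  unfolding upper_semicontinuous_on_top_def
proof (intro ballI allI impI)
  fix y c
  assume "y \<in> topspace (dr_topology X d)" and "d r x y < c"
  have "y \<in> X"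
    using topspace_dr_topology_subset \<open>y \<in> topspace (dr_topology X d)\<close> by (rule subsetD)
  obtain \<epsilon> where "\<epsilon> > 0" "d r x y < ennreal \<epsilon>" and "ennreal \<epsilon> \<le> c"
    using \<open>d r x y < c\<close> by (rule ennreal_less_imp_real_between)
  with \<open>y \<in> X\<close> have "y \<in> nbhd X d r \<epsilon> x"
    by (simp add: nbhd_def)
  then obtain s where "s > 0" and sub: "nbhd X d (r + s + \<epsilon>) s y \<subseteq> nbhd X d r \<epsilon> x"
    by (rule nbhd_contains_nbhd[OF assms(2-5) \<open>\<epsilon> > 0\<close>])
  have "r + s + \<epsilon> > 0"
    using \<open>r > 0\<close> \<open>s > 0\<close> \<open>\<epsilon> > 0\<close> by simp
  then have "openin (dr_topology X d) (nbhd X d (r + s + \<epsilon>) s y)"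
    by (rule openin_dr_topology_nbhd[OF \<open>y \<in> X\<close> _ \<open>s > 0\<close>])
  moreover have "y \<in> nbhd X d (r + s + \<epsilon>) s y"
    by (rule self_mem_nbhd[OF assms(1) \<open>y \<in> X\<close> \<open>r + s + \<epsilon> > 0\<close> \<open>s > 0\<close>])
  moreover have "d r x z < c" if "z \<in> nbhd X d r \<epsilon> x" for z
  proof -
    have "d r x z < ennreal \<epsilon>"
      using that by (simp add: nbhd_def)
    then show ?thesis
      using \<open>ennreal \<epsilon> \<le> c\<close> by (rule order.strict_trans2)
  qed
  ultimately show "\<exists>U. openin (dr_topology X d) U \<and> y \<in> U \<and> (\<forall>z\<in>U. d r x z < c)"
    using sub by (intro exI[of _ "nbhd X d (r + s + \<epsilon>) s y"]) blast
qed

end
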